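(* Let $M$ be a semifinite von Neumann algebra with a normal faithful semifinite trace $\tau$. Then $\mathcal{U}(M)_2=\{u\in\mathcal{U}(M): 1-u\in L^2(M,\tau)\}$, with the topology given by the metric $d(u,v)=\|u-v\|_2$, is a topological group.
   Context: $\mathcal{U}(M)$ is the unitary group of $M$. $L^2(M,\tau)$ is the Hilbert space completion of $\mathfrak{n}_\tau=\{x\in M:\tau(x^*x)<\infty\}$ for the inner product $\langle x,y\rangle=\tau(x^*y)$, with norm $\|x\|_2=\tau(x^*x)^{1/2}$. *)

theory Defs
  imports "HOL-Analysis.Analysis" "HOL-Library.Extended_Nonnegative_Real"
begin

text \<open>A complex Hilbert space is modelled as a real Hilbert space 'h (class real_inner +
complete_space) together with a complex structure J (multiplication by the imaginary unit):
a real-linear isometry with J o J = -1.  The complex inner product is then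
<x,y> = x \<bullet> y + i (x \<bullet> J y), and complex-linear bounded operators are exactly the
bounded real-linear operators commuting with J.\<close>

definition complex_structure :: "('h::real_inner \<Rightarrow>\<^sub>L 'h) \<Rightarrow> bool" where
  "complex_structure J \<longleftrightarrow> J o\<^sub>L J = - id_blinfun \<and> (\<forall>x y. J x \<bullet> J y = x \<bullet> y)"

definition cbounded :: "('h::real_normed_vector \<Rightarrow>\<^sub>L 'h) \<Rightarrow> ('h \<Rightarrow>\<^sub>L 'h) set" where
  "cbounded J = {x. x o\<^sub>L J = J o\<^sub>L x}"

text \<open>Hilbert space adjoint of a bounded operator (for complex-linear operators the real
and the complex adjoints coincide).\<close>
definition adj :: "('h::real_inner \<Rightarrow>\<^sub>L 'h) \<Rightarrow> ('h \<Rightarrow>\<^sub>L 'h)" where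
  "adj x = Blinfun (adjoint (blinfun_apply x))"

definition commutant :: "('h::real_normed_vector \<Rightarrow>\<^sub>L 'h) \<Rightarrow> ('h \<Rightarrow>\<^sub>L 'h) set \<Rightarrow> ('h \<Rightarrow>\<^sub>L 'h) set" where
  "commutant J S = {y \<in> cbounded J. \<forall>x\<in>S. x o\<^sub>L y = y o\<^sub>L x}"

definition von_neumann_algebra :: "('h::{real_inner,complete_space} \<Rightarrow>\<^sub>L 'h) \<Rightarrow> ('h \<Rightarrow>\<^sub>L 'h) set \<Rightarrow> bool" where
  "von_neumann_algebra J M \<longleftrightarrow> complex_structure J \<and> M \<subseteq> cbounded J \<and>
     commutant J (commutant J M) = M \<and> (\<forall>x\<in>M. adj x \<in> M)"

definition pos_part :: "('h::real_inner \<Rightarrow>\<^sub>L 'h) set \<Rightarrow> ('h \<Rightarrow>\<^sub>L 'h) set" where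
  "pos_part M = {x. \<exists>y\<in>M. x = adj y o\<^sub>L y}"

definition op_le :: "('h::real_inner \<Rightarrow>\<^sub>L 'h) set \<Rightarrow> ('h \<Rightarrow>\<^sub>L 'h) \<Rightarrow> ('h \<Rightarrow>\<^sub>L 'h) \<Rightarrow> bool" where
  "op_le M x y \<longleftrightarrow> y - x \<in> pos_part M"

definition nfs_trace :: "('h::real_inner \<Rightarrow>\<^sub>L 'h) set \<Rightarrow> (('h \<Rightarrow>\<^sub>L 'h) \<Rightarrow> ennreal) \<Rightarrow> bool" where
  "nfs_trace M \<tau> \<longleftrightarrow>
     \<comment> \<open>additive and positively homogeneous on M_+\<close>
     (\<forall>x\<in>pos_part M. \<forall>y\<in>pos_part M. \<tau> (x + y) = \<tau> x + \<tau> y) \<and>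
     (\<forall>x\<in>pos_part M. \<forall>c::real. c \<ge> 0 \<longrightarrow> \<tau> (c *\<^sub>R x) = ennreal c * \<tau> x) \<and>
     \<comment> \<open>trace property\<close>
     (\<forall>x\<in>M. \<tau> (adj x o\<^sub>L x) = \<tau> (x o\<^sub>L adj x)) \<and>
     \<comment> \<open>faithful\<close>
     (\<forall>x\<in>pos_part M. \<tau> x = 0 \<longrightarrow> x = 0) \<and>
     \<comment> \<open>normal: tau(sup x_i) = sup tau(x_i) for every bounded increasing net in M_+
        (represented by its upward directed range F with least upper bound x)\<close>
     (\<forall>F x. F \<subseteq> pos_part M \<longrightarrow> F \<noteq> {} \<longrightarrow>
        (\<forall>a\<in>F. \<forall>b\<in>F. \<exists>c\<in>F. op_le M a c \<and> op_le M b c) \<longrightarrow>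
        x \<in> pos_part M \<longrightarrow> (\<forall>a\<in>F. op_le M a x) \<longrightarrow>
        (\<forall>z\<in>pos_part M. (\<forall>a\<in>F. op_le M a z) \<longrightarrow> op_le M x z) \<longrightarrow>
        \<tau> x = (SUP a\<in>F. \<tau> a)) \<and>
     \<comment> \<open>semifinite\<close>
     (\<forall>x\<in>pos_part M. x \<noteq> 0 \<longrightarrow> (\<exists>y\<in>pos_part M. y \<noteq> 0 \<and> op_le M y x \<and> \<tau> y < \<infinity>))"

definition unitary_group :: "('h::real_inner \<Rightarrow>\<^sub>L 'h) set \<Rightarrow> ('h \<Rightarrow>\<^sub>L 'h) set" where
  "unitary_group M = {u\<in>M. adj u o\<^sub>L u = id_blinfun \<and> u o\<^sub>L adj u = id_blinfun}"

text \<open>n_tau = {x \<in> M. tau(x* x) < \<infinity>}: the elements of M that lie in L^2(M,tau).\<close>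
definition L2_part :: "('h::real_inner \<Rightarrow>\<^sub>L 'h) set \<Rightarrow> (('h \<Rightarrow>\<^sub>L 'h) \<Rightarrow> ennreal) \<Rightarrow> ('h \<Rightarrow>\<^sub>L 'h) set" where
  "L2_part M \<tau> = {x\<in>M. \<tau> (adj x o\<^sub>L x) < \<infinity>}"

definition norm2 :: "(('h::real_inner \<Rightarrow>\<^sub>L 'h) \<Rightarrow> ennreal) \<Rightarrow> ('h \<Rightarrow>\<^sub>L 'h) \<Rightarrow> real" where
  "norm2 \<tau> x = sqrt (enn2real (\<tau> (adj x o\<^sub>L x)))"

definition unitary_group_2 :: "('h::real_inner \<Rightarrow>\<^sub>L 'h) set \<Rightarrow> (('h \<Rightarrow>\<^sub>L 'h) \<Rightarrow> ennreal) \<Rightarrow> ('h \<Rightarrow>\<^sub>L 'h) set" where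
  "unitary_group_2 M \<tau> = {u\<in>unitary_group M. id_blinfun - u \<in> L2_part M \<tau>}"

end

theory Submission
  imports Defs
begin

text \<open>Multiplying by a unitary on the left does not change \<open>\<tau>(x\<^sup>* x)\<close>, and by the trace
property \<open>\<tau>(x\<^sup>* x) = \<tau>(x x\<^sup>*)\<close> neither does taking adjoints nor, consequently, multiplying
by a unitary on the right. Writing \<open>uv - u'v' = u(v - v') + (u - u')v'\<close> therefore gives
\<open>d(uv, u'v') \<le> d(u, u') + d(v, v')\<close>, and \<open>d(u\<^sup>*, v\<^sup>*) = d(u, v)\<close>, so multiplication and
inversion are Lipschitz. The triangle inequality for \<open>\<parallel>\<cdot>\<parallel>\<^sub>2\<close> comes from the identity
\<open>(a + b)\<^sup>*(a + b) + c\<^sup>* c = (1 + t) a\<^sup>* a + (1 + 1/t) b\<^sup>* b\<close> for \<open>c = \<surd>t a - b/\<surd>t\<close>, optimised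
over \<open>t > 0\<close>. That bounded operators on a general Hilbert space have adjoints at all is the
Riesz representation theorem, obtained from the point of minimal norm on a closed hyperplane.\<close>

section \<open>Riesz representation\<close>

lemma parallelogram_law:
  fixes x y :: "'a::real_inner"
  shows "norm (x + y)^2 + norm (x - y)^2 = 2 * norm x ^ 2 + 2 * norm y ^ 2"
  by (simp add: power2_norm_eq_inner inner_add inner_diff inner_commute)

lemma convex_minimizing_sequence_Cauchy:
  fixes X :: "nat \<Rightarrow> 'a::real_inner"
  assumes "convex C" and X: "\<And>n. X n \<in> C" and lower: "\<And>y. y \<in> C \<Longrightarrow> d \<le> norm y"
    and lim: "(\<lambda>n. norm (X n)) \<longlonglongrightarrow> d"
  shows "Cauchy X"
proof -
  have "0 \<le> d" using LIMSEQ_le_const[OF lim] by auto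
  have bound: "norm (x - y)^2 \<le> 2 * (norm x ^ 2 - d^2) + 2 * (norm y ^ 2 - d^2)"
    if "x \<in> C" "y \<in> C" for x y
  proof -
    have "(1/2) *\<^sub>R x + (1/2) *\<^sub>R y \<in> C" using convexD[OF \<open>convex C\<close> that] by simp
    hence "d \<le> norm ((1/2) *\<^sub>R (x + y))" using lower by (simp add: scaleR_right_distrib)
    hence "(2 * d)^2 \<le> norm (x + y)^2" using \<open>0 \<le> d\<close> by (intro power_mono) auto
    thus ?thesis using parallelogram_law[of x y] by (simp add: power_mult_distrib)
  qed
  define e where "e n = norm (X n)^2 - d^2" for n
  have "e \<longlonglongrightarrow> d^2 - d^2" unfolding e_def by (intro tendsto_intros lim)
  hence e: "e \<longlonglongrightarrow> 0" by simp
  show ?thesis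
  proof (rule CauchyI)
    fix \<epsilon> :: real assume "\<epsilon> > 0"
    then obtain N where N: "\<And>n. n \<ge> N \<Longrightarrow> \<bar>e n\<bar> < \<epsilon>^2 / 4"
      using LIMSEQ_D[OF e, of "\<epsilon>^2 / 4"] by auto
    have "norm (X m - X n) < \<epsilon>" if "m \<ge> N" "n \<ge> N" for m n
    proof -
      have "norm (X m - X n)^2 \<le> 2 * e m + 2 * e n" using bound[OF X X] by (simp add: e_def)
      also have "\<dots> < \<epsilon>^2" using N[OF that(1)] N[OF that(2)] by linarith
      finally show ?thesis using \<open>\<epsilon> > 0\<close> by (simp add: power_less_imp_less_base)
    qed
    thus "\<exists>N. \<forall>m\<ge>N. \<forall>n\<ge>N. norm (X m - X n) < \<epsilon>" by blast
  qed
qed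

lemma closed_convex_has_min_norm:
  fixes C :: "'a::{real_inner,complete_space} set"
  assumes "closed C" "convex C" "C \<noteq> {}"
  obtains z where "z \<in> C" "\<And>y. y \<in> C \<Longrightarrow> norm z \<le> norm y"
proof -
  define d where "d = Inf (norm ` C)"
  have lower: "d \<le> norm y" if "y \<in> C" for y
    unfolding d_def by (rule cInf_lower) (use that in \<open>auto intro: bdd_belowI[of _ 0]\<close>)
  have "\<exists>x\<in>C. norm x < d + 1 / (real n + 1)" for n
    using cInf_lessD[of "norm ` C" "d + 1 / (real n + 1)"] \<open>C \<noteq> {}\<close> by (auto simp: d_def)
  then obtain X where X: "\<And>n. X n \<in> C" "\<And>n. norm (X n) < d + 1 / (real n + 1)"
    by metis
  have "(\<lambda>n. 1 / (real n + 1)) \<longlonglongrightarrow> 0"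
    using LIMSEQ_inverse_real_of_nat by (simp add: inverse_eq_divide add.commute)
  hence "(\<lambda>n. d + 1 / (real n + 1)) \<longlonglongrightarrow> d + 0" by (intro tendsto_intros)
  hence upper: "(\<lambda>n. d + 1 / (real n + 1)) \<longlonglongrightarrow> d" by simp
  have "\<forall>\<^sub>F n in sequentially. d \<le> norm (X n)" "\<forall>\<^sub>F n in sequentially. norm (X n) \<le> d + 1 / (real n + 1)"
    using lower X by (auto intro!: always_eventually less_imp_le)
  hence lim: "(\<lambda>n. norm (X n)) \<longlonglongrightarrow> d"
    using upper by (rule real_tendsto_sandwich[OF _ _ tendsto_const])
  have "Cauchy X" using convex_minimizing_sequence_Cauchy[OF \<open>convex C\<close> X(1) lower lim] .
  then obtain z where z: "X \<longlonglongrightarrow> z" using Cauchy_convergent_iff convergent_def by blast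
  have "norm z = d" using tendsto_norm[OF z] lim by (rule LIMSEQ_unique)
  moreover have "z \<in> C" using closed_sequentially[OF \<open>closed C\<close> X(1) z] .
  ultimately show ?thesis using that lower by auto
qed

lemma inner_eq_0_if_norm_le_translates:
  fixes z k :: "'a::real_inner"
  assumes "\<And>t. norm z \<le> norm (z + t *\<^sub>R k)"
  shows "z \<bullet> k = 0"
proof (cases "k = 0")
  case False
  define t where "t = - (z \<bullet> k) / (k \<bullet> k)"
  have "k \<bullet> k > 0" using False by simp
  have "norm z ^ 2 \<le> norm (z + t *\<^sub>R k) ^ 2" using assms by (intro power_mono) auto
  also have "\<dots> = norm z ^ 2 + 2 * t * (z \<bullet> k) + t^2 * (k \<bullet> k)"
    unfolding power2_norm_eq_inner by (simp add: inner_add inner_commute power2_eq_square algebra_simps)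
  also have "\<dots> = norm z ^ 2 - (z \<bullet> k)^2 / (k \<bullet> k)"
    using \<open>k \<bullet> k > 0\<close> unfolding t_def by (simp add: power2_eq_square divide_simps)
  finally have "(z \<bullet> k)^2 / (k \<bullet> k) \<le> 0" by simp
  thus ?thesis using \<open>k \<bullet> k > 0\<close> by (simp add: divide_le_0_iff)
qed simp

lemma riesz_representation:
  fixes \<phi> :: "'a::{real_inner,complete_space} \<Rightarrow> real"
  assumes "bounded_linear \<phi>"
  obtains w where "\<And>x. \<phi> x = x \<bullet> w"
proof (cases "\<exists>a. \<phi> a \<noteq> 0")
  case True
  interpret bounded_linear \<phi> by fact
  obtain b where "\<phi> b \<noteq> 0" using True by blast
  hence "\<phi> ((1 / \<phi> b) *\<^sub>R b) = 1" by (simp add: scale)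
  define C where "C = \<phi> -` {1}"
  have "closed C" unfolding C_def
    by (intro continuous_closed_vimage) (auto intro: linear_continuous_at assms)
  moreover have "convex C"
    unfolding C_def by (intro convex_linear_vimage) (auto simp: linear_axioms)
  moreover have "C \<noteq> {}" unfolding C_def using \<open>\<phi> ((1 / \<phi> b) *\<^sub>R b) = 1\<close> by blast
  ultimately obtain z where z: "z \<in> C" "\<And>y. y \<in> C \<Longrightarrow> norm z \<le> norm y"
    using closed_convex_has_min_norm by blast
  have orth: "z \<bullet> k = 0" if "\<phi> k = 0" for k
    by (rule inner_eq_0_if_norm_le_translates, rule z(2)) (use z(1) that in \<open>simp add: C_def add scale\<close>)
  have "z \<bullet> z \<noteq> 0" using z(1) by (auto simp: C_def)
  have "\<phi> x = x \<bullet> ((1 / (z \<bullet> z)) *\<^sub>R z)" for x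
  proof -
    have "z \<bullet> (x - \<phi> x *\<^sub>R z) = 0" using z(1) by (intro orth) (simp add: C_def diff scale)
    hence "z \<bullet> x = \<phi> x * (z \<bullet> z)" by (simp add: inner_diff_right)
    thus ?thesis using \<open>z \<bullet> z \<noteq> 0\<close> by (simp add: inner_commute)
  qed
  thus ?thesis by (rule that)
qed (use that[of 0] in simp)

section \<open>Adjoints of bounded operators\<close>

lemma inner_adj_right:
  fixes f :: "'a::{real_inner,complete_space} \<Rightarrow>\<^sub>L 'a"
  shows "f x \<bullet> y = x \<bullet> adj f y"
proof -
  have "\<exists>w. \<forall>x. f x \<bullet> y = x \<bullet> w" for y
    by (rule riesz_representation[of "\<lambda>x. f x \<bullet> y"])
      (auto intro: bounded_linear_compose[OF bounded_linear_inner_left blinfun.bounded_linear_right])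
  then obtain g where g: "\<And>x y. f x \<bullet> y = x \<bullet> g y" by metis
  have "bounded_linear g"
  proof (rule bounded_linear_intro[of g "norm f"])
    show "g (a + b) = g a + g b" for a b
      by (rule vector_eq_ldot[THEN iffD1]) (simp add: inner_add_right flip: g)
    show "g (r *\<^sub>R a) = r *\<^sub>R g a" for r a
      by (rule vector_eq_ldot[THEN iffD1]) (simp flip: g)
    show "norm (g y) \<le> norm y * norm f" for y
    proof -
      have "norm (g y) * norm (g y) = f (g y) \<bullet> y" by (simp add: g flip: power2_norm_eq_inner power2_eq_square)
      also have "\<dots> \<le> norm (f (g y)) * norm y" by (rule norm_cauchy_schwarz)
      also have "\<dots> \<le> (norm y * norm f) * norm (g y)"
        using norm_blinfun[of f "g y"] by (simp add: mult_left_mono algebra_simps)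
      finally show ?thesis by (cases "g y = 0") auto
    qed
  qed
  moreover have "adjoint (blinfun_apply f) = g" by (rule adjoint_unique) (simp add: g)
  ultimately have "blinfun_apply (adj f) = g" unfolding adj_def by (simp add: bounded_linear_Blinfun_apply)
  thus ?thesis by (simp add: g)
qed

lemma inner_adj_left:
  fixes f :: "'a::{real_inner,complete_space} \<Rightarrow>\<^sub>L 'a"
  shows "adj f x \<bullet> y = x \<bullet> f y"
  by (metis inner_adj_right inner_commute)

lemma adj_eqI:
  fixes f g :: "'a::{real_inner,complete_space} \<Rightarrow>\<^sub>L 'a"
  assumes "\<And>x y. f x \<bullet> y = x \<bullet> g y"
  shows "adj f = g"
  by (rule blinfun_eqI, rule vector_eq_ldot[THEN iffD1]) (simp flip: inner_adj_right assms)

context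
  fixes f g :: "'a::{real_inner,complete_space} \<Rightarrow>\<^sub>L 'a"
begin

lemma adj_add: "adj (f + g) = adj f + adj g"
  by (rule adj_eqI) (simp add: blinfun.add_left inner_add inner_adj_right)

lemma adj_diff: "adj (f - g) = adj f - adj g"
  by (rule adj_eqI) (simp add: blinfun.diff_left inner_diff inner_adj_right)

lemma adj_uminus: "adj (- f) = - adj f"
  by (rule adj_eqI) (simp add: blinfun.minus_left inner_adj_right)

lemma adj_scaleR: "adj (c *\<^sub>R f) = c *\<^sub>R adj f"
  by (rule adj_eqI) (simp add: blinfun.scaleR_left inner_adj_right)

lemma adj_compose: "adj (f o\<^sub>L g) = adj g o\<^sub>L adj f"
  by (rule adj_eqI) (simp add: inner_adj_right)

lemma adj_adj: "adj (adj f) = f"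
  by (rule adj_eqI) (simp add: inner_adj_left)

lemma adj_compose_self_eq_0_iff: "adj f o\<^sub>L f = 0 \<longleftrightarrow> f = 0"
proof
  assume "adj f o\<^sub>L f = 0"
  hence "f x \<bullet> f x = 0" for x by (metis blinfun_apply_blinfun_compose inner_adj_left inner_zero_left zero_blinfun.rep_eq)
  thus "f = 0" by (intro blinfun_eqI) simp
qed simp

end

lemma adj_id: "adj (id_blinfun :: 'a::{real_inner,complete_space} \<Rightarrow>\<^sub>L 'a) = id_blinfun"
  by (rule adj_eqI) simp

lemma blinfun_compose_eq_iff: "f o\<^sub>L g = h o\<^sub>L k \<longleftrightarrow> (\<forall>a. f (g a) = h (k a))"
  by (metis blinfun_apply_blinfun_compose blinfun_eqI)

lemma left_inverse_blinfun_apply: "f o\<^sub>L g = id_blinfun \<Longrightarrow> f (g y) = y"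
  by (metis blinfun_apply_blinfun_compose blinfun_apply_id_blinfun)

section \<open>Tracial operator *-algebras\<close>

lemma
  assumes "x \<in> commutant J S" "y \<in> commutant J S"
  shows commutant_add: "x + y \<in> commutant J S"
    and commutant_scaleR: "c *\<^sub>R x \<in> commutant J S"
    and commutant_compose: "x o\<^sub>L y \<in> commutant J S"
  using assms unfolding commutant_def cbounded_def blinfun_compose_eq_iff
  by (auto simp: blinfun.bilinear_simps)

lemma id_mem_commutant: "id_blinfun \<in> commutant J S"
  unfolding commutant_def cbounded_def blinfun_compose_eq_iff by simp

locale star_algebra =
  fixes M :: "('a::{real_inner,complete_space} \<Rightarrow>\<^sub>L 'a) set"
  assumes id_mem: "id_blinfun \<in> M"
    and add_mem: "x \<in> M \<Longrightarrow> y \<in> M \<Longrightarrow> x + y \<in> M"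
    and scaleR_mem: "x \<in> M \<Longrightarrow> c *\<^sub>R x \<in> M"
    and compose_mem: "x \<in> M \<Longrightarrow> y \<in> M \<Longrightarrow> x o\<^sub>L y \<in> M"
    and adj_mem: "x \<in> M \<Longrightarrow> adj x \<in> M"
begin

lemma uminus_mem: "x \<in> M \<Longrightarrow> - x \<in> M"
  using scaleR_mem[of x "-1"] by simp

lemma diff_mem: "x \<in> M \<Longrightarrow> y \<in> M \<Longrightarrow> x - y \<in> M"
  using add_mem[of x "- y"] uminus_mem by simp

lemma zero_mem: "0 \<in> M"
  using scaleR_mem[OF id_mem, of 0] by simp

lemma adj_compose_self_mem_pos_part: "x \<in> M \<Longrightarrow> adj x o\<^sub>L x \<in> pos_part M"
  unfolding pos_part_def by blast

lemma scaleR_mem_pos_part: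
  assumes "0 \<le> c" "p \<in> pos_part M"
  shows "c *\<^sub>R p \<in> pos_part M"
proof -
  obtain y where y: "y \<in> M" "p = adj y o\<^sub>L y" using assms(2) unfolding pos_part_def by blast
  have "c *\<^sub>R p = adj (sqrt c *\<^sub>R y) o\<^sub>L (sqrt c *\<^sub>R y)"
    using assms(1) by (intro blinfun_eqI) (simp add: y adj_scaleR blinfun.bilinear_simps)
  thus ?thesis using scaleR_mem[OF y(1)] unfolding pos_part_def by blast
qed

end

lemma von_neumann_algebra_imp_star_algebra:
  assumes "von_neumann_algebra J M"
  shows "star_algebra M"
proof -
  have M: "M = commutant J (commutant J M)" and "\<And>x. x \<in> M \<Longrightarrow> adj x \<in> M"
    using assms by (auto simp: von_neumann_algebra_def)
  thus ?thesis
    by unfold_locales (metis commutant_add commutant_scaleR commutant_compose id_mem_commutant)+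
qed

locale tracial_star_algebra = star_algebra M for M +
  fixes \<tau> :: "('a::{real_inner,complete_space} \<Rightarrow>\<^sub>L 'a) \<Rightarrow> ennreal"
  assumes tau_add: "x \<in> pos_part M \<Longrightarrow> y \<in> pos_part M \<Longrightarrow> \<tau> (x + y) = \<tau> x + \<tau> y"
    and tau_scaleR: "x \<in> pos_part M \<Longrightarrow> 0 \<le> c \<Longrightarrow> \<tau> (c *\<^sub>R x) = ennreal c * \<tau> x"
    and tau_adj_compose_commute: "x \<in> M \<Longrightarrow> \<tau> (adj x o\<^sub>L x) = \<tau> (x o\<^sub>L adj x)"
    and tau_faithful: "x \<in> pos_part M \<Longrightarrow> \<tau> x = 0 \<Longrightarrow> x = 0"

lemma nfs_trace_imp_tracial_star_algebra:
  assumes "star_algebra M" "nfs_trace M \<tau>"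
  shows "tracial_star_algebra M \<tau>"
  using assms by (simp add: tracial_star_algebra_def tracial_star_algebra_axioms_def nfs_trace_def)

section \<open>The trace 2-norm\<close>

lemma adj_compose_self_weighted_parallelogram:
  fixes a b :: "'a::{real_inner,complete_space} \<Rightarrow>\<^sub>L 'a"
  assumes "s \<noteq> 0"
  defines "c \<equiv> s *\<^sub>R a - (1 / s) *\<^sub>R b"
  shows "(adj (a + b) o\<^sub>L (a + b)) + (adj c o\<^sub>L c)
    = (1 + s^2) *\<^sub>R (adj a o\<^sub>L a) + (1 + 1 / s^2) *\<^sub>R (adj b o\<^sub>L b)"
proof (rule blinfun_eqI)
  fix x
  define p q r w where "p = adj a (a x)" and "q = adj a (b x)" and "r = adj b (a x)" and "w = adj b (b x)"
  have "((adj (a + b) o\<^sub>L (a + b)) + (adj c o\<^sub>L c)) x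
      = (p + q + r + w) + (s *\<^sub>R (s *\<^sub>R p - (1 / s) *\<^sub>R q) - (1 / s) *\<^sub>R (s *\<^sub>R r - (1 / s) *\<^sub>R w))"
    by (simp add: p_def q_def r_def w_def c_def adj_add adj_diff adj_scaleR
        plus_blinfun.rep_eq minus_blinfun.rep_eq scaleR_blinfun.rep_eq
        blinfun.add_right blinfun.diff_right blinfun.scaleR_right)
  also have "\<dots> = (1 + s^2) *\<^sub>R p + (1 + 1 / s^2) *\<^sub>R w"
    using assms(1) by (simp add: algebra_simps power2_eq_square)
  finally show "((adj (a + b) o\<^sub>L (a + b)) + (adj c o\<^sub>L c)) x
      = ((1 + s^2) *\<^sub>R (adj a o\<^sub>L a) + (1 + 1 / s^2) *\<^sub>R (adj b o\<^sub>L b)) x"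
    by (simp add: p_def w_def plus_blinfun.rep_eq scaleR_blinfun.rep_eq)
qed

lemma sqrt_le_sqrt_add_sqrt_if_weighted_bound:
  fixes A B X :: real
  assumes "0 < A" "0 < B" and bound: "\<And>t. 0 < t \<Longrightarrow> X \<le> (1 + t) * A + (1 + 1 / t) * B"
  shows "sqrt X \<le> sqrt A + sqrt B"
proof -
  define t where "t = sqrt B / sqrt A"
  have "(1 + t) * A + (1 + 1 / t) * B = (sqrt A + sqrt B)^2"
    using assms(1,2) by (simp add: t_def field_simps power2_eq_square flip: real_sqrt_mult)
  hence "X \<le> (sqrt A + sqrt B)^2" using bound[of t] assms(1,2) by (simp add: t_def)
  thus ?thesis using assms(1,2) by (intro real_le_lsqrt) auto
qed

context tracial_star_algebra
begin

abbreviation norm2_sq :: "('a \<Rightarrow>\<^sub>L 'a) \<Rightarrow> ennreal"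
  where "norm2_sq x \<equiv> \<tau> (adj x o\<^sub>L x)"

lemma tau_zero: "\<tau> 0 = 0"
  using tau_scaleR[OF adj_compose_self_mem_pos_part[OF id_mem], of 0] by simp

lemma norm2_sq_eq_0_iff: "x \<in> M \<Longrightarrow> norm2_sq x = 0 \<longleftrightarrow> x = 0"
  using tau_faithful[OF adj_compose_self_mem_pos_part] adj_compose_self_eq_0_iff tau_zero
  by (metis blinfun_compose_zero(2))

lemma norm2_sq_uminus: "norm2_sq (- x) = norm2_sq x"
proof -
  have "adj (- x) o\<^sub>L - x = adj x o\<^sub>L x"
    by (simp add: adj_uminus blinfun_compose_eq_iff uminus_blinfun.rep_eq blinfun.minus_right)
  thus ?thesis by simp
qed

lemma norm2_sq_isometry_compose:
  assumes "adj u o\<^sub>L u = id_blinfun"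
  shows "norm2_sq (u o\<^sub>L x) = norm2_sq x"
proof -
  have "adj (u o\<^sub>L x) o\<^sub>L (u o\<^sub>L x) = adj x o\<^sub>L x"
    using left_inverse_blinfun_apply[OF assms] by (simp add: adj_compose blinfun_compose_eq_iff)
  thus ?thesis by simp
qed

lemma norm2_sq_adj: "x \<in> M \<Longrightarrow> norm2_sq (adj x) = norm2_sq x"
  by (simp add: adj_adj tau_adj_compose_commute)

lemma norm2_sq_compose_coisometry:
  assumes "x \<in> M" "v \<in> M" "v o\<^sub>L adj v = id_blinfun"
  shows "norm2_sq (x o\<^sub>L v) = norm2_sq x"
proof -
  have "norm2_sq (x o\<^sub>L v) = norm2_sq (adj v o\<^sub>L adj x)"
    using norm2_sq_adj[OF compose_mem[OF assms(1,2)]] by (simp add: adj_compose)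
  also have "\<dots> = norm2_sq (adj x)"
    using assms(3) by (intro norm2_sq_isometry_compose) (simp add: adj_adj)
  finally show ?thesis using norm2_sq_adj[OF assms(1)] by simp
qed

lemma norm2_sq_add_le:
  assumes "a \<in> M" "b \<in> M" "0 < t"
  shows "norm2_sq (a + b) \<le> ennreal (1 + t) * norm2_sq a + ennreal (1 + 1 / t) * norm2_sq b"
proof -
  define c where "c = sqrt t *\<^sub>R a - (1 / sqrt t) *\<^sub>R b"
  have "c \<in> M" unfolding c_def using assms by (intro diff_mem scaleR_mem)
  have "norm2_sq (a + b) \<le> norm2_sq (a + b) + norm2_sq c" by simp
  also have "\<dots> = \<tau> ((adj (a + b) o\<^sub>L (a + b)) + (adj c o\<^sub>L c))"
    using assms \<open>c \<in> M\<close> by (intro tau_add[symmetric] adj_compose_self_mem_pos_part add_mem)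
  also have "\<dots> = \<tau> ((1 + t) *\<^sub>R (adj a o\<^sub>L a) + (1 + 1 / t) *\<^sub>R (adj b o\<^sub>L b))"
    using adj_compose_self_weighted_parallelogram[of "sqrt t" a b] assms(3) by (simp add: c_def)
  also have "\<dots> = ennreal (1 + t) * norm2_sq a + ennreal (1 + 1 / t) * norm2_sq b"
    using assms by (simp add: tau_add tau_scaleR scaleR_mem_pos_part adj_compose_self_mem_pos_part)
  finally show ?thesis .
qed

lemma L2_part_add:
  assumes "a \<in> L2_part M \<tau>" "b \<in> L2_part M \<tau>"
  shows "a + b \<in> L2_part M \<tau>"
proof -
  have "norm2_sq (a + b) \<le> ennreal 2 * norm2_sq a + ennreal 2 * norm2_sq b"
    using norm2_sq_add_le[of a b 1] assms by (simp add: L2_part_def)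
  also have "\<dots> < \<infinity>" using assms by (simp add: L2_part_def ennreal_mult_less_top)
  finally show ?thesis using assms by (simp add: L2_part_def add_mem)
qed

lemma norm2_triangle:
  assumes a: "a \<in> L2_part M \<tau>" and b: "b \<in> L2_part M \<tau>"
  shows "norm2 \<tau> (a + b) \<le> norm2 \<tau> a + norm2 \<tau> b"
proof (cases "a = 0 \<or> b = 0")
  case False
  define A B where "A = enn2real (norm2_sq a)" and "B = enn2real (norm2_sq b)"
  have A: "norm2_sq a = ennreal A" and B: "norm2_sq b = ennreal B"
    using a b by (simp_all add: A_def B_def L2_part_def)
  have "0 < A" "0 < B"
    using False a b norm2_sq_eq_0_iff by (auto simp: A_def B_def L2_part_def enn2real_positive_iff zero_less_iff_neq_zero)
  have "enn2real (norm2_sq (a + b)) \<le> (1 + t) * A + (1 + 1 / t) * B" if "0 < t" for t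
  proof -
    have "norm2_sq (a + b) \<le> ennreal ((1 + t) * A + (1 + 1 / t) * B)"
      using norm2_sq_add_le[of a b t] a b that \<open>0 < A\<close> \<open>0 < B\<close>
      by (simp add: A B L2_part_def ennreal_mult)
    from enn2real_mono[OF this] show ?thesis using that \<open>0 < A\<close> \<open>0 < B\<close> by (simp del: ennreal_plus)
  qed
  thus ?thesis unfolding norm2_def A_def B_def
    using \<open>0 < A\<close> \<open>0 < B\<close> by (intro sqrt_le_sqrt_add_sqrt_if_weighted_bound) (auto simp: A_def B_def)
qed (auto simp: norm2_def tau_zero)

lemma L2_part_uminus: "a \<in> L2_part M \<tau> \<Longrightarrow> - a \<in> L2_part M \<tau>"
  by (simp add: L2_part_def norm2_sq_uminus uminus_mem)

lemma L2_part_diff: "a \<in> L2_part M \<tau> \<Longrightarrow> b \<in> L2_part M \<tau> \<Longrightarrow> a - b \<in> L2_part M \<tau>"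
  using L2_part_add[OF _ L2_part_uminus] by fastforce

lemma L2_part_adj: "a \<in> L2_part M \<tau> \<Longrightarrow> adj a \<in> L2_part M \<tau>"
  by (simp add: L2_part_def norm2_sq_adj adj_mem)

lemma norm2_uminus: "norm2 \<tau> (- a) = norm2 \<tau> a"
  by (simp add: norm2_def norm2_sq_uminus)

end

section \<open>The group \<open>U(M)\<^sub>2\<close>\<close>

lemma continuous_map_mtopology_if_Lipschitz:
  assumes "Metric_space A d" "Metric_space B e" "f ` A \<subseteq> B"
    and Lipschitz: "\<And>x y. x \<in> A \<Longrightarrow> y \<in> A \<Longrightarrow> e (f x) (f y) \<le> C * d x y"
  shows "continuous_map (Metric_space.mtopology A d) (Metric_space.mtopology B e) f"
proof -
  interpret Metric_space A d by fact
  have "\<exists>\<delta>>0. \<forall>x. x \<in> A \<and> d a x < \<delta> \<longrightarrow> e (f a) (f x) < \<epsilon>" if "a \<in> A" "0 < \<epsilon>" for a \<epsilon>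
  proof (intro exI conjI allI impI)
    show "0 < \<epsilon> / (\<bar>C\<bar> + 1)" using \<open>0 < \<epsilon>\<close> by simp
    fix x assume x: "x \<in> A \<and> d a x < \<epsilon> / (\<bar>C\<bar> + 1)"
    have "e (f a) (f x) \<le> (\<bar>C\<bar> + 1) * d a x"
      using Lipschitz[of a x] x \<open>a \<in> A\<close> nonneg[of a x]
      by (smt (verit, best) abs_ge_self mult_right_mono)
    also have "\<dots> < \<epsilon>" using x by (simp add: field_simps)
    finally show "e (f a) (f x) < \<epsilon>" .
  qed
  thus ?thesis using assms(3) by (simp add: metric_continuous_map[OF assms(2)])
qed

context tracial_star_algebra
begin

lemma norm2_eq_0_iff: "a \<in> L2_part M \<tau> \<Longrightarrow> norm2 \<tau> a = 0 \<longleftrightarrow> a = 0"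
  by (auto simp: norm2_def L2_part_def enn2real_eq_0_iff norm2_sq_eq_0_iff tau_zero)

lemma norm2_adj: "a \<in> M \<Longrightarrow> norm2 \<tau> (adj a) = norm2 \<tau> a"
  by (simp add: norm2_def norm2_sq_adj)

lemma norm2_isometry_compose: "adj u o\<^sub>L u = id_blinfun \<Longrightarrow> norm2 \<tau> (u o\<^sub>L x) = norm2 \<tau> x"
  by (simp add: norm2_def norm2_sq_isometry_compose)

lemma norm2_compose_coisometry:
  "x \<in> M \<Longrightarrow> v \<in> M \<Longrightarrow> v o\<^sub>L adj v = id_blinfun \<Longrightarrow> norm2 \<tau> (x o\<^sub>L v) = norm2 \<tau> x"
  by (simp add: norm2_def norm2_sq_compose_coisometry)

lemma L2_part_isometry_compose:
  "u \<in> M \<Longrightarrow> adj u o\<^sub>L u = id_blinfun \<Longrightarrow> x \<in> L2_part M \<tau> \<Longrightarrow> u o\<^sub>L x \<in> L2_part M \<tau>"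
  by (simp add: L2_part_def norm2_sq_isometry_compose compose_mem)

lemma L2_part_compose_coisometry:
  "v \<in> M \<Longrightarrow> v o\<^sub>L adj v = id_blinfun \<Longrightarrow> x \<in> L2_part M \<tau> \<Longrightarrow> x o\<^sub>L v \<in> L2_part M \<tau>"
  by (simp add: L2_part_def norm2_sq_compose_coisometry compose_mem)

lemma unitary_group_2_memD:
  assumes "u \<in> unitary_group_2 M \<tau>"
  shows "u \<in> M" "adj u o\<^sub>L u = id_blinfun" "u o\<^sub>L adj u = id_blinfun" "id_blinfun - u \<in> L2_part M \<tau>"
  using assms by (simp_all add: unitary_group_2_def unitary_group_def)

lemma diff_mem_L2_part_if_unitary_group_2:
  assumes "u \<in> unitary_group_2 M \<tau>" "v \<in> unitary_group_2 M \<tau>"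
  shows "u - v \<in> L2_part M \<tau>"
  using L2_part_diff[OF unitary_group_2_memD(4)[OF assms(2)] unitary_group_2_memD(4)[OF assms(1)]]
  by simp

lemma id_mem_unitary_group_2: "id_blinfun \<in> unitary_group_2 M \<tau>"
proof -
  have "id_blinfun o\<^sub>L id_blinfun = (id_blinfun :: 'a \<Rightarrow>\<^sub>L 'a)" by (rule blinfun_eqI) simp
  thus ?thesis using id_mem zero_mem
    by (simp add: unitary_group_2_def unitary_group_def L2_part_def adj_id tau_zero)
qed

lemma compose_mem_unitary_group_2:
  assumes u: "u \<in> unitary_group_2 M \<tau>" and v: "v \<in> unitary_group_2 M \<tau>"
  shows "u o\<^sub>L v \<in> unitary_group_2 M \<tau>"
proof -
  note u = unitary_group_2_memD[OF u] and v = unitary_group_2_memD[OF v]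
  have "adj (u o\<^sub>L v) o\<^sub>L (u o\<^sub>L v) = id_blinfun" "(u o\<^sub>L v) o\<^sub>L adj (u o\<^sub>L v) = id_blinfun"
    using left_inverse_blinfun_apply[OF u(2)] left_inverse_blinfun_apply[OF u(3)]
      left_inverse_blinfun_apply[OF v(2)] left_inverse_blinfun_apply[OF v(3)]
    by (auto intro!: blinfun_eqI simp: adj_compose)
  moreover have "id_blinfun - (u o\<^sub>L v) = (id_blinfun - u) + (u o\<^sub>L (id_blinfun - v))"
    by (rule blinfun_eqI) (simp add: blinfun.bilinear_simps)
  hence "id_blinfun - (u o\<^sub>L v) \<in> L2_part M \<tau>"
    using L2_part_add[OF u(4) L2_part_isometry_compose[OF u(1,2) v(4)]] by (simp only:)
  ultimately show ?thesis
    using u v by (simp add: unitary_group_2_def unitary_group_def compose_mem)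
qed

lemma adj_mem_unitary_group_2:
  assumes "u \<in> unitary_group_2 M \<tau>"
  shows "adj u \<in> unitary_group_2 M \<tau>"
proof -
  note u = unitary_group_2_memD[OF assms]
  have "id_blinfun - adj u = adj (id_blinfun - u)" by (simp add: adj_diff adj_id)
  hence "id_blinfun - adj u \<in> L2_part M \<tau>" using u(4) by (simp add: L2_part_adj)
  thus ?thesis using u by (simp add: unitary_group_2_def unitary_group_def adj_adj adj_mem)
qed

lemma metric_unitary_group_2: "Metric_space (unitary_group_2 M \<tau>) (\<lambda>u v. norm2 \<tau> (u - v))"
proof
  fix u v w assume U: "u \<in> unitary_group_2 M \<tau>" "v \<in> unitary_group_2 M \<tau>" "w \<in> unitary_group_2 M \<tau>"
  show "norm2 \<tau> (u - v) = 0 \<longleftrightarrow> u = v"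
    using norm2_eq_0_iff[OF diff_mem_L2_part_if_unitary_group_2[OF U(1,2)]] by simp
  show "norm2 \<tau> (u - w) \<le> norm2 \<tau> (u - v) + norm2 \<tau> (v - w)"
    using norm2_triangle[OF diff_mem_L2_part_if_unitary_group_2[OF U(1,2)]
        diff_mem_L2_part_if_unitary_group_2[OF U(2,3)]] by simp
next
  fix u v
  show "0 \<le> norm2 \<tau> (u - v)" by (simp add: norm2_def)
  show "norm2 \<tau> (u - v) = norm2 \<tau> (v - u)" using norm2_uminus[of "u - v"] by simp
qed

lemma norm2_compose_diff_le:
  assumes "u \<in> unitary_group_2 M \<tau>" "v \<in> unitary_group_2 M \<tau>"
    and "u' \<in> unitary_group_2 M \<tau>" "v' \<in> unitary_group_2 M \<tau>"
  shows "norm2 \<tau> ((u o\<^sub>L v) - (u' o\<^sub>L v')) \<le> norm2 \<tau> (u - u') + norm2 \<tau> (v - v')"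
proof -
  note u = unitary_group_2_memD[OF assms(1)] and v' = unitary_group_2_memD[OF assms(4)]
  have L2: "v - v' \<in> L2_part M \<tau>" "u - u' \<in> L2_part M \<tau>"
    using assms by (simp_all add: diff_mem_L2_part_if_unitary_group_2)
  have "(u o\<^sub>L v) - (u' o\<^sub>L v') = (u o\<^sub>L (v - v')) + ((u - u') o\<^sub>L v')"
    by (rule blinfun_eqI) (simp add: blinfun.bilinear_simps)
  hence "norm2 \<tau> ((u o\<^sub>L v) - (u' o\<^sub>L v')) = norm2 \<tau> ((u o\<^sub>L (v - v')) + ((u - u') o\<^sub>L v'))"
    by simp
  also have "\<dots> \<le> norm2 \<tau> (u o\<^sub>L (v - v')) + norm2 \<tau> ((u - u') o\<^sub>L v')"
    using L2 u v' by (intro norm2_triangle L2_part_isometry_compose L2_part_compose_coisometry)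
  also have "\<dots> = norm2 \<tau> (v - v') + norm2 \<tau> (u - u')"
    using L2 u v' by (simp add: norm2_isometry_compose norm2_compose_coisometry L2_part_def)
  finally show ?thesis by simp
qed

lemma continuous_map_compose_unitary_group_2:
  defines "T \<equiv> Metric_space.mtopology (unitary_group_2 M \<tau>) (\<lambda>u v. norm2 \<tau> (u - v))"
  shows "continuous_map (prod_topology T T) T (\<lambda>(u, v). u o\<^sub>L v)"
proof -
  interpret U: Metric_space12 "unitary_group_2 M \<tau>" "\<lambda>u v. norm2 \<tau> (u - v)" "unitary_group_2 M \<tau>" "\<lambda>u v. norm2 \<tau> (u - v)"
    by (simp add: Metric_space12_def metric_unitary_group_2)
  have "norm2 \<tau> ((u o\<^sub>L v) - (u' o\<^sub>L v')) \<le> 2 * prod_dist (\<lambda>u v. norm2 \<tau> (u - v)) (\<lambda>u v. norm2 \<tau> (u - v)) (u, v) (u', v')"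
    if "u \<in> unitary_group_2 M \<tau>" "v \<in> unitary_group_2 M \<tau>" "u' \<in> unitary_group_2 M \<tau>" "v' \<in> unitary_group_2 M \<tau>"
    for u v u' v'
    using norm2_compose_diff_le[OF that] U.component_le_prod_metric(1)[of u u' v v']
      U.component_le_prod_metric(2)[of v v' u u'] by linarith
  thus ?thesis unfolding T_def U.mtopology_prod_metric[symmetric]
    by (intro continuous_map_mtopology_if_Lipschitz[of _ _ _ _ _ 2] U.prod_metric metric_unitary_group_2)
      (auto intro: compose_mem_unitary_group_2)
qed

lemma continuous_map_adj_unitary_group_2:
  defines "T \<equiv> Metric_space.mtopology (unitary_group_2 M \<tau>) (\<lambda>u v. norm2 \<tau> (u - v))"
  shows "continuous_map T T adj"
  unfolding T_def
proof (intro continuous_map_mtopology_if_Lipschitz[of _ _ _ _ _ 1] metric_unitary_group_2)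
  fix u v assume "u \<in> unitary_group_2 M \<tau>" "v \<in> unitary_group_2 M \<tau>"
  thus "norm2 \<tau> (adj u - adj v) \<le> 1 * norm2 \<tau> (u - v)"
    by (simp add: adj_diff[symmetric] norm2_adj diff_mem unitary_group_2_memD)
qed (auto intro: adj_mem_unitary_group_2)

end

theorem lemma3p3:
  fixes J :: "'h::{real_inner,complete_space} \<Rightarrow>\<^sub>L 'h"
    and M :: "('h \<Rightarrow>\<^sub>L 'h) set"
    and \<tau> :: "('h \<Rightarrow>\<^sub>L 'h) \<Rightarrow> ennreal"
  assumes "von_neumann_algebra J M"
    and "nfs_trace M \<tau>"
  defines "U2 \<equiv> unitary_group_2 M \<tau>"
    and "d \<equiv> (\<lambda>u v. norm2 \<tau> (u - v))"
  shows "Metric_space U2 d \<and>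
         id_blinfun \<in> U2 \<and>
         (\<forall>u\<in>U2. \<forall>v\<in>U2. u o\<^sub>L v \<in> U2) \<and>
         (\<forall>u\<in>U2. adj u \<in> U2) \<and>
         continuous_map (prod_topology (Metric_space.mtopology U2 d) (Metric_space.mtopology U2 d))
           (Metric_space.mtopology U2 d) (\<lambda>(u, v). u o\<^sub>L v) \<and>
         continuous_map (Metric_space.mtopology U2 d) (Metric_space.mtopology U2 d) adj"
proof -
  interpret tracial_star_algebra M \<tau>
    using assms(1,2) by (intro nfs_trace_imp_tracial_star_algebra von_neumann_algebra_imp_star_algebra)
  show ?thesis
    unfolding U2_def d_def
    using metric_unitary_group_2 id_mem_unitary_group_2 compose_mem_unitary_group_2
      adj_mem_unitary_group_2 continuous_map_compose_unitary_group_2 continuous_map_adj_unitary_group_2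
    by blast
qed

end
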